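(* For any integers $s\ge1$ and $M\ge1$ there exists $\varepsilon>0$ small enough such that on the star graph $G(s,\varepsilon)$ the following hold for the Laplacian $-\frac{\partial^2}{\partial x^2}$: (a) the first $M$ eigenvalues are all simple; (b) the first $M$ eigenfunctions are invariant under permutations of the $s$ small edges; (c) for every $n\le M$, the eigenfunction $f_n$ has exactly $n-1$ zeroes on the long edge and no zeroes on the small edges or at the inner vertex.
   Context: $G(s,\varepsilon)$ is the star graph with one central vertex, one edge of length $1$ and $s$ edges of length $\varepsilon$, each joining the central vertex to a degree-one vertex. The operator $-\frac{d^2}{dx^2}$ acts edgewise with Dirichlet conditions at the degree-one vertices and Neumann–Kirchhoff conditions at the central vertex (continuity and vanishing sum of outgoing derivatives). Eigenvalues are ordered increasingly with multiplicity, $f_n$ being an eigenfunction for the $n$-th one. Zeroes are counted away from the degree-one vertices. *)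

theory Defs
  imports "HOL-Analysis.Analysis" "HOL-Combinatorics.Permutations"
begin

text \<open>Each edge j is parametrised by t in [0, edge_len eps j], t = 0 being the
  central vertex and t = edge_len eps j the degree-one vertex.
  A function on the graph is f :: nat => real => real, f j being its
  restriction to edge j.\<close>

definition edge_len :: "real \<Rightarrow> nat \<Rightarrow> real" where
  "edge_len eps j = (if j = 0 then 1 else eps)"

definition star_eigenfunction ::
  "nat \<Rightarrow> real \<Rightarrow> real \<Rightarrow> (nat \<Rightarrow> real \<Rightarrow> real) \<Rightarrow> bool" where
  "star_eigenfunction s eps lam f \<longleftrightarrow>
     (\<exists>f'. (\<forall>j\<le>s. \<forall>x\<in>{0..edge_len eps j}.
              (f j has_real_derivative f' j x) (at x within {0..edge_len eps j}) \<and>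
              (f' j has_real_derivative (- lam * f j x)) (at x within {0..edge_len eps j}))
          \<and> (\<forall>j\<le>s. f j (edge_len eps j) = 0)
          \<and> (\<forall>j\<le>s. f j 0 = f 0 0)
          \<and> (\<Sum>j\<le>s. f' j 0) = 0)
     \<and> (\<exists>j\<le>s. \<exists>x\<in>{0..edge_len eps j}. f j x \<noteq> 0)"

definition star_eigenvalue :: "nat \<Rightarrow> real \<Rightarrow> real \<Rightarrow> bool" where
  "star_eigenvalue s eps lam \<longleftrightarrow> (\<exists>f. star_eigenfunction s eps lam f)"

definition star_simple_eigenvalue :: "nat \<Rightarrow> real \<Rightarrow> real \<Rightarrow> bool" where
  "star_simple_eigenvalue s eps lam \<longleftrightarrow> star_eigenvalue s eps lam \<and>
     (\<forall>f g. star_eigenfunction s eps lam f \<longrightarrow> star_eigenfunction s eps lam g \<longrightarrow>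
        (\<exists>c. \<forall>j\<le>s. \<forall>x\<in>{0..edge_len eps j}. g j x = c * f j x))"

end

theory Submission
  imports Defs
begin

text \<open>On each edge an eigenfunction solves \<open>u'' = - lam u\<close> with a Dirichlet end, so it is a
  multiple of one explicit solution. Continuity and Kirchhoff's condition at the centre then rule
  out \<open>lam \<le> 0\<close> (all edge values and all outgoing slopes would have one sign) and, for
  \<open>lam = k\<^sup>2\<close>, reduce the problem to the secular equation
  \<open>cos k sin (k eps) + s sin k cos (k eps) = 0\<close>, every eigenfunction being a multiple of a
  single mode that coincides on the short edges. If \<open>M eps < 1\<close>, the function
  \<open>cot k + s cot (k eps)\<close> is strictly decreasing between consecutive multiples of \<open>pi\<close>
  and the secular function changes sign there, so the first \<open>M\<close> eigenvalues are \<open>k\<^sub>n\<^sup>2\<close>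
  with exactly one \<open>k\<^sub>n\<close> in each interval \<open>((n - 1) pi, n pi)\<close>. The mode is proportional to
  \<open>sin (k\<^sub>n (1 - x))\<close> on the long edge, with \<open>n - 1\<close> interior zeros, and
  \<open>sin (k\<^sub>n (eps - x))\<close> with \<open>k\<^sub>n eps < pi\<close> on the short edges, where it has none.\<close>

section \<open>Solutions of \<open>u'' = - lam u\<close> on an interval\<close>

definition osc_solution :: "real \<Rightarrow> real \<Rightarrow> (real \<Rightarrow> real) \<Rightarrow> (real \<Rightarrow> real) \<Rightarrow> bool" where
  "osc_solution lam L u u' \<longleftrightarrow>
     (\<forall>x\<in>{0..L}. (u has_real_derivative u' x) (at x within {0..L}) \<and>
                 (u' has_real_derivative - lam * u x) (at x within {0..L}))"

lemma osc_solution_scale: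
  assumes "osc_solution lam L u u'"
  shows "osc_solution lam L (\<lambda>x. c * u x) (\<lambda>x. c * u' x)"
  using assms unfolding osc_solution_def by (auto intro!: derivative_eq_intros)

lemma osc_solution_add:
  assumes "osc_solution lam L u u'" and "osc_solution lam L v v'"
  shows "osc_solution lam L (\<lambda>x. u x + v x) (\<lambda>x. u' x + v' x)"
  using assms unfolding osc_solution_def by (auto intro!: derivative_eq_intros simp: algebra_simps)

lemma abs_two_mult_le_sum_squares:
  fixes a u v :: real
  shows "\<bar>2 * a * u * v\<bar> \<le> \<bar>a\<bar> * (u\<^sup>2 + v\<^sup>2)"
proof -
  have "2 * \<bar>u * v\<bar> \<le> u\<^sup>2 + v\<^sup>2"
    using sum_squares_bound[of "\<bar>u\<bar>" "\<bar>v\<bar>"] by (simp add: abs_mult power2_abs)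
  then have "\<bar>a\<bar> * (2 * \<bar>u * v\<bar>) \<le> \<bar>a\<bar> * (u\<^sup>2 + v\<^sup>2)"
    by (rule mult_left_mono) simp
  moreover have "\<bar>2 * a * u * v\<bar> = \<bar>a\<bar> * (2 * \<bar>u * v\<bar>)"
    by (simp only: abs_mult abs_numeral mult_ac)
  ultimately show ?thesis by simp
qed

text \<open>The weighted energy \<open>exp (\<bar>1 - lam\<bar> x) (u'\<^sup>2 + u\<^sup>2)\<close> is nondecreasing, so it
  vanishes on \<open>[0, L]\<close> once it vanishes at \<open>L\<close>.\<close>

lemma osc_solution_zero_terminal:
  assumes sol: "osc_solution lam L u u'" and "u L = 0" and "u' L = 0"
  shows "\<forall>x\<in>{0..L}. u x = 0 \<and> u' x = 0"
proof
  define c where "c = \<bar>1 - lam\<bar>"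
  define E where "E x = exp (c * x) * ((u' x)\<^sup>2 + (u x)\<^sup>2)" for x
  define D where "D x = exp (c * x) * (c * ((u' x)\<^sup>2 + (u x)\<^sup>2) + 2 * (1 - lam) * u x * u' x)" for x
  have E_deriv: "(E has_real_derivative D x) (at x within {0..L})" if "x \<in> {0..L}" for x
  proof -
    from sol that have "(u has_real_derivative u' x) (at x within {0..L})"
      and "(u' has_real_derivative - lam * u x) (at x within {0..L})"
      by (auto simp: osc_solution_def)
    then have "(E has_real_derivative exp (c * x) * c * ((u' x)\<^sup>2 + (u x)\<^sup>2)
        + exp (c * x) * (2 * u' x * (- lam * u x) + 2 * u x * u' x)) (at x within {0..L})"
      unfolding E_def by (auto intro!: derivative_eq_intros simp: power2_eq_square)
    then show ?thesis by (simp add: D_def algebra_simps)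
  qed
  have D_nonneg: "D x \<ge> 0" for x
    using abs_two_mult_le_sum_squares[of "1 - lam" "u x" "u' x"]
    unfolding D_def c_def by (simp add: abs_le_iff add.commute)
  fix x assume x: "x \<in> {0..L}"
  have E_cont: "continuous_on {0..L} E"
    using E_deriv DERIV_continuous continuous_on_eq_continuous_within by blast
  have "E x \<le> E L"
  proof (rule DERIV_nonneg_imp_increasing_open[of x L E])
    show "x \<le> L" using x by simp
    show "continuous_on {x..L} E" using E_cont by (rule continuous_on_subset) (use x in auto)
    fix y assume "x < y" "y < L"
    then have "DERIV E y :> D y" using E_deriv[of y] x at_within_Icc_at[of 0 y L] by auto
    then show "\<exists>z. DERIV E y :> z \<and> z \<ge> 0" using D_nonneg by blast
  qed
  also have "E L = 0" unfolding E_def using assms by simp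
  finally have "(u' x)\<^sup>2 + (u x)\<^sup>2 \<le> 0" unfolding E_def by (simp add: mult_le_0_iff)
  then show "u x = 0 \<and> u' x = 0" by (simp add: sum_power2_le_zero_iff)
qed

text \<open>The solutions of \<open>u'' = - lam u\<close> with \<open>u 0 = 0, u' 0 = 1\<close> and with
  \<open>u 0 = 1, u' 0 = 0\<close>.\<close>

definition osc_sin :: "real \<Rightarrow> real \<Rightarrow> real" where
  "osc_sin lam t =
     (if lam > 0 then sin (sqrt lam * t) / sqrt lam
      else if lam = 0 then t
      else sinh (sqrt (- lam) * t) / sqrt (- lam))"

definition osc_cos :: "real \<Rightarrow> real \<Rightarrow> real" where
  "osc_cos lam t =
     (if lam > 0 then cos (sqrt lam * t)
      else if lam = 0 then 1
      else cosh (sqrt (- lam) * t))"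

lemma osc_sin_0 [simp]: "osc_sin lam 0 = 0"
  and osc_cos_0 [simp]: "osc_cos lam 0 = 1"
  by (simp_all add: osc_sin_def osc_cos_def)

lemma osc_sin_cos_cases:
  obtains k where "k > 0" "lam = k\<^sup>2"
      "osc_sin lam = (\<lambda>t. sin (k * t) / k)" "osc_cos lam = (\<lambda>t. cos (k * t))"
  | "lam = 0" "osc_sin lam = (\<lambda>t. t)" "osc_cos lam = (\<lambda>t. 1)"
  | k where "k > 0" "lam = - k\<^sup>2"
      "osc_sin lam = (\<lambda>t. sinh (k * t) / k)" "osc_cos lam = (\<lambda>t. cosh (k * t))"
proof -
  consider "lam > 0" | "lam = 0" | "lam < 0" by linarith
  then show ?thesis
  proof cases
    case 1
    then show ?thesis by (intro that(1)[of "sqrt lam"]) (auto simp: osc_sin_def osc_cos_def fun_eq_iff)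
  next
    case 2
    then show ?thesis by (intro that(2)) (auto simp: osc_sin_def osc_cos_def fun_eq_iff)
  next
    case 3
    then show ?thesis by (intro that(3)[of "sqrt (- lam)"]) (auto simp: osc_sin_def osc_cos_def fun_eq_iff)
  qed
qed

lemma osc_sin_cos_sq:
  assumes "k > 0"
  shows "osc_sin (k\<^sup>2) t = sin (k * t) / k" and "osc_cos (k\<^sup>2) t = cos (k * t)"
  using assms by (simp_all add: osc_sin_def osc_cos_def)

lemma osc_sin_pos: "lam \<le> 0 \<Longrightarrow> t > 0 \<Longrightarrow> osc_sin lam t > 0"
  by (cases lam rule: osc_sin_cos_cases) auto

lemma osc_cos_pos: "lam \<le> 0 \<Longrightarrow> osc_cos lam t > 0"
  by (cases lam rule: osc_sin_cos_cases) auto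

lemma DERIV_osc_sin: "(osc_sin lam has_real_derivative osc_cos lam t) (at t)"
proof (cases lam rule: osc_sin_cos_cases)
  case (1 k)
  have "((\<lambda>t. sin (k * t) / k) has_real_derivative cos (k * t)) (at t)"
    using \<open>k > 0\<close> by (auto intro!: derivative_eq_intros)
  with 1 show ?thesis by simp
next
  case 2
  then show ?thesis by simp
next
  case (3 k)
  have "((\<lambda>t. sinh (k * t) / k) has_real_derivative cosh (k * t)) (at t)"
    using \<open>k > 0\<close> by (auto intro!: derivative_eq_intros)
  with 3 show ?thesis by simp
qed

lemma DERIV_osc_cos: "(osc_cos lam has_real_derivative - lam * osc_sin lam t) (at t)"
proof (cases lam rule: osc_sin_cos_cases)
  case (1 k)
  have "((\<lambda>t. cos (k * t)) has_real_derivative - k\<^sup>2 * (sin (k * t) / k)) (at t)"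
    using \<open>k > 0\<close> by (auto intro!: derivative_eq_intros simp: power2_eq_square)
  with 1 show ?thesis by simp
next
  case 2
  then show ?thesis by simp
next
  case (3 k)
  have "((\<lambda>t. cosh (k * t)) has_real_derivative k\<^sup>2 * (sinh (k * t) / k)) (at t)"
    using \<open>k > 0\<close> by (auto intro!: derivative_eq_intros simp: power2_eq_square)
  with 3 show ?thesis by simp
qed

lemma osc_solution_osc_sin:
  "osc_solution lam L (\<lambda>x. osc_sin lam (L - x)) (\<lambda>x. - osc_cos lam (L - x))"
proof -
  have reflect: "((\<lambda>x. L - x) has_real_derivative -1) (at x)" for x
    by (auto intro!: derivative_eq_intros)
  have "((\<lambda>x. osc_sin lam (L - x)) has_real_derivative - osc_cos lam (L - x)) (at x)"
    and "((\<lambda>x. - osc_cos lam (L - x)) has_real_derivative - lam * osc_sin lam (L - x)) (at x)" for x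
    using DERIV_chain2[OF DERIV_osc_sin reflect] DERIV_minus[OF DERIV_chain2[OF DERIV_osc_cos reflect]]
    by simp_all
  then show ?thesis
    unfolding osc_solution_def by (blast intro: has_field_derivative_at_within)
qed

lemma osc_solution_dirichlet:
  assumes sol: "osc_solution lam L f f'" and "f L = 0" and "x \<in> {0..L}"
  shows "f x = - f' L * osc_sin lam (L - x)" and "f' x = f' L * osc_cos lam (L - x)"
proof -
  have "osc_solution lam L (\<lambda>x. f x + f' L * osc_sin lam (L - x))
                           (\<lambda>x. f' x + f' L * - osc_cos lam (L - x))"
    using sol osc_solution_scale[OF osc_solution_osc_sin] by (rule osc_solution_add)
  then have "\<forall>x\<in>{0..L}. f x + f' L * osc_sin lam (L - x) = 0 \<and>
                         f' x + f' L * - osc_cos lam (L - x) = 0"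
    by (rule osc_solution_zero_terminal) (simp_all add: \<open>f L = 0\<close>)
  with \<open>x \<in> {0..L}\<close> have "f x + f' L * osc_sin lam (L - x) = 0"
    and "f' x + f' L * - osc_cos lam (L - x) = 0" by blast+
  then show "f x = - f' L * osc_sin lam (L - x)" and "f' x = f' L * osc_cos lam (L - x)"
    by (simp_all add: eq_neg_iff_add_eq_0)
qed

lemma proportional_sum_zero_imp_zero:
  fixes a p q :: "'a \<Rightarrow> real"
  assumes "finite A" and p: "\<forall>j\<in>A. p j > 0" and q: "\<forall>j\<in>A. q j > 0"
    and common: "\<forall>j\<in>A. a j * p j = c" and sum: "(\<Sum>j\<in>A. a j * q j) = 0"
  shows "\<forall>j\<in>A. a j = 0"
proof (cases "A = {}")
  case False
  have a: "a j = c / p j" if "j \<in> A" for j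
    using p common that by (metis less_irrefl nonzero_mult_div_cancel_right)
  have "c * (\<Sum>j\<in>A. q j / p j) = (\<Sum>j\<in>A. a j * q j)"
    by (simp add: sum_distrib_left a)
  with sum have "c * (\<Sum>j\<in>A. q j / p j) = 0" by simp
  moreover have "(\<Sum>j\<in>A. q j / p j) > 0"
    using \<open>finite A\<close> False p q by (intro sum_pos) auto
  ultimately have "c = 0" by simp
  with a show ?thesis by simp
qed simp

section \<open>Eigenfunctions of the star graph\<close>

lemma edge_len_0 [simp]: "edge_len eps 0 = 1"
  and edge_len_nonzero [simp]: "j \<noteq> 0 \<Longrightarrow> edge_len eps j = eps"
  by (simp_all add: edge_len_def)

lemma star_eigenfunction_iff:
  "star_eigenfunction s eps lam f \<longleftrightarrow>
     (\<exists>f'. (\<forall>j\<le>s. osc_solution lam (edge_len eps j) (f j) (f' j))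
          \<and> (\<forall>j\<le>s. f j (edge_len eps j) = 0)
          \<and> (\<forall>j\<le>s. f j 0 = f 0 0)
          \<and> (\<Sum>j\<le>s. f' j 0) = 0)
     \<and> (\<exists>j\<le>s. \<exists>x\<in>{0..edge_len eps j}. f j x \<noteq> 0)"
  by (simp add: star_eigenfunction_def osc_solution_def)

lemma star_eigenfunction_edge_form:
  assumes "eps > 0" and "star_eigenfunction s eps lam f"
  obtains a where "\<forall>j\<le>s. \<forall>x\<in>{0..edge_len eps j}. f j x = a j * osc_sin lam (edge_len eps j - x)"
    and "\<forall>j\<le>s. a j * osc_sin lam (edge_len eps j) = a 0 * osc_sin lam 1"
    and "(\<Sum>j\<le>s. a j * osc_cos lam (edge_len eps j)) = 0"
    and "\<exists>j\<le>s. a j \<noteq> 0"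
proof -
  obtain f' where sol: "\<forall>j\<le>s. osc_solution lam (edge_len eps j) (f j) (f' j)"
    and dirichlet: "\<forall>j\<le>s. f j (edge_len eps j) = 0"
    and continuous: "\<forall>j\<le>s. f j 0 = f 0 0"
    and kirchhoff: "(\<Sum>j\<le>s. f' j 0) = 0"
    and nontrivial: "\<exists>j\<le>s. \<exists>x\<in>{0..edge_len eps j}. f j x \<noteq> 0"
    using assms(2) unfolding star_eigenfunction_iff by blast
  define a where "a j = - f' j (edge_len eps j)" for j
  have form: "f j x = a j * osc_sin lam (edge_len eps j - x)
                 \<and> f' j x = - a j * osc_cos lam (edge_len eps j - x)"
    if "j \<le> s" and "x \<in> {0..edge_len eps j}" for j x
  proof -
    have "osc_solution lam (edge_len eps j) (f j) (f' j)" and "f j (edge_len eps j) = 0"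
      using sol dirichlet \<open>j \<le> s\<close> by simp_all
    from osc_solution_dirichlet[OF this \<open>x \<in> {0..edge_len eps j}\<close>]
    show ?thesis by (simp add: a_def)
  qed
  have centre: "0 \<in> {0..edge_len eps j}" for j
    using \<open>eps > 0\<close> by (simp add: edge_len_def)
  have at_centre: "f j 0 = a j * osc_sin lam (edge_len eps j)"
      "f' j 0 = - a j * osc_cos lam (edge_len eps j)" if "j \<le> s" for j
    using form[OF that centre] by simp_all
  show ?thesis
  proof (rule that)
    show "\<forall>j\<le>s. \<forall>x\<in>{0..edge_len eps j}. f j x = a j * osc_sin lam (edge_len eps j - x)"
      using form by blast
    show "\<forall>j\<le>s. a j * osc_sin lam (edge_len eps j) = a 0 * osc_sin lam 1"
    proof (intro allI impI)
      fix j assume "j \<le> s"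
      then have "a j * osc_sin lam (edge_len eps j) = f j 0" by (simp add: at_centre)
      also have "\<dots> = f 0 0" using continuous \<open>j \<le> s\<close> by blast
      also have "\<dots> = a 0 * osc_sin lam 1" by (simp add: at_centre)
      finally show "a j * osc_sin lam (edge_len eps j) = a 0 * osc_sin lam 1" .
    qed
    have "(\<Sum>j\<le>s. a j * osc_cos lam (edge_len eps j)) = - (\<Sum>j\<le>s. f' j 0)"
      using at_centre(2) by (simp add: sum_negf[symmetric])
    with kirchhoff show "(\<Sum>j\<le>s. a j * osc_cos lam (edge_len eps j)) = 0" by simp
    from nontrivial obtain j x where "j \<le> s" "x \<in> {0..edge_len eps j}" "f j x \<noteq> 0" by blast
    with form show "\<exists>j\<le>s. a j \<noteq> 0" by force
  qed
qed

lemma star_eigenvalue_pos: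
  assumes "eps > 0" and "star_eigenvalue s eps lam"
  shows "lam > 0"
proof (rule ccontr)
  assume "\<not> lam > 0"
  then have "lam \<le> 0" by simp
  obtain f where "star_eigenfunction s eps lam f"
    using assms(2) unfolding star_eigenvalue_def by blast
  with \<open>eps > 0\<close> obtain a
    where common: "\<forall>j\<le>s. a j * osc_sin lam (edge_len eps j) = a 0 * osc_sin lam 1"
      and kirchhoff: "(\<Sum>j\<le>s. a j * osc_cos lam (edge_len eps j)) = 0"
      and nontrivial: "\<exists>j\<le>s. a j \<noteq> 0"
    by (rule star_eigenfunction_edge_form)
  have "\<forall>j\<in>{..s}. a j = 0"
  proof (rule proportional_sum_zero_imp_zero)
    show "\<forall>j\<in>{..s}. osc_sin lam (edge_len eps j) > 0"
      using \<open>lam \<le> 0\<close> \<open>eps > 0\<close> by (auto intro: osc_sin_pos simp: edge_len_def)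
    show "\<forall>j\<in>{..s}. osc_cos lam (edge_len eps j) > 0"
      using \<open>lam \<le> 0\<close> by (auto intro: osc_cos_pos)
  qed (use common kirchhoff in auto)
  with nontrivial show False by auto
qed

definition secular :: "nat \<Rightarrow> real \<Rightarrow> real \<Rightarrow> real" where
  "secular s eps k = cos k * sin (k * eps) + real s * sin k * cos (k * eps)"

definition star_amplitude :: "real \<Rightarrow> real \<Rightarrow> nat \<Rightarrow> real" where
  "star_amplitude eps k j = (if j = 0 then sin (k * eps) else sin k)"

text \<open>Both branches of the mode take the value \<open>sin k sin (k eps)\<close> at the centre, so continuity
  is built in and Kirchhoff's condition becomes \<open>secular s eps k = 0\<close>.\<close>

definition star_mode :: "real \<Rightarrow> real \<Rightarrow> nat \<Rightarrow> real \<Rightarrow> real" where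
  "star_mode eps k j x = star_amplitude eps k j * sin (k * (edge_len eps j - x))"

lemma secular_sin_ne_zero:
  assumes "secular s eps k = 0" and "sin (k * eps) \<noteq> 0"
  shows "sin k \<noteq> 0"
proof
  assume "sin k = 0"
  then have "cos k \<noteq> 0" using sin_cos_squared_add[of k] by auto
  with assms \<open>sin k = 0\<close> show False by (simp add: secular_def)
qed

lemma star_amplitude_sin_edge: "star_amplitude eps k j * sin (k * edge_len eps j) = sin k * sin (k * eps)"
  by (simp add: star_amplitude_def edge_len_def)

lemma sum_star_amplitude_cos:
  "(\<Sum>j\<le>s. star_amplitude eps k j * cos (k * edge_len eps j)) = secular s eps k"
proof -
  have "{..s} = insert 0 {1..s}" by auto
  then have "(\<Sum>j\<le>s. star_amplitude eps k j * cos (k * edge_len eps j))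
      = sin (k * eps) * cos k + (\<Sum>j\<in>{1..s}. sin k * cos (k * eps))"
    by (simp add: star_amplitude_def)
  then show ?thesis by (simp add: secular_def)
qed

lemma star_mode_eigenfunction:
  assumes "k > 0" and "sin (k * eps) \<noteq> 0" and "secular s eps k = 0"
  shows "star_eigenfunction s eps (k\<^sup>2) (star_mode eps k)"
  unfolding star_eigenfunction_iff
proof (intro conjI exI[of _ "\<lambda>j x. - k * star_amplitude eps k j * cos (k * (edge_len eps j - x))"])
  let ?A = "star_amplitude eps k"
  show "\<forall>j\<le>s. osc_solution (k\<^sup>2) (edge_len eps j) (star_mode eps k j)
                 (\<lambda>x. - k * ?A j * cos (k * (edge_len eps j - x)))"
  proof (intro allI impI)
    fix j
    have "osc_solution (k\<^sup>2) (edge_len eps j) (\<lambda>x. k * ?A j * osc_sin (k\<^sup>2) (edge_len eps j - x))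
            (\<lambda>x. k * ?A j * - osc_cos (k\<^sup>2) (edge_len eps j - x))"
      by (rule osc_solution_scale[OF osc_solution_osc_sin])
    then show "osc_solution (k\<^sup>2) (edge_len eps j) (star_mode eps k j)
                 (\<lambda>x. - k * ?A j * cos (k * (edge_len eps j - x)))"
      using \<open>k > 0\<close> by (simp add: osc_sin_cos_sq star_mode_def[abs_def])
  qed
  show "\<forall>j\<le>s. star_mode eps k j (edge_len eps j) = 0"
    by (simp add: star_mode_def)
  have "star_mode eps k j 0 = sin k * sin (k * eps)" for j
    by (simp add: star_mode_def star_amplitude_sin_edge)
  then show "\<forall>j\<le>s. star_mode eps k j 0 = star_mode eps k 0 0" by simp
  have "(\<Sum>j\<le>s. - k * ?A j * cos (k * (edge_len eps j - 0))) = - k * secular s eps k"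
    by (simp add: sum_star_amplitude_cos[symmetric] sum_distrib_left mult.assoc)
  with assms(3) show "(\<Sum>j\<le>s. - k * ?A j * cos (k * (edge_len eps j - 0))) = 0"
    by simp
  have "star_mode eps k 0 0 \<noteq> 0"
    using assms secular_sin_ne_zero by (simp add: star_mode_def star_amplitude_def)
  then show "\<exists>j\<le>s. \<exists>x\<in>{0..edge_len eps j}. star_mode eps k j x \<noteq> 0"
    by (metis atLeastAtMost_iff edge_len_0 le0 order_refl zero_le_one)
qed

lemma star_eigenfunction_sq_eq_mode:
  assumes "eps > 0" and "k > 0" and "k * eps < pi"
    and "star_eigenfunction s eps (k\<^sup>2) f"
  shows "secular s eps k = 0"
    and "\<exists>c. c \<noteq> 0 \<and> (\<forall>j\<le>s. \<forall>x\<in>{0..edge_len eps j}. f j x = c * star_mode eps k j x)"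
proof -
  have sin_eps: "sin (k * eps) > 0"
    using assms(1-3) by (simp add: sin_gt_zero)
  obtain a
    where form: "\<forall>j\<le>s. \<forall>x\<in>{0..edge_len eps j}. f j x = a j * osc_sin (k\<^sup>2) (edge_len eps j - x)"
      and common: "\<forall>j\<le>s. a j * osc_sin (k\<^sup>2) (edge_len eps j) = a 0 * osc_sin (k\<^sup>2) 1"
      and kirchhoff: "(\<Sum>j\<le>s. a j * osc_cos (k\<^sup>2) (edge_len eps j)) = 0"
      and nontrivial: "\<exists>j\<le>s. a j \<noteq> 0"
    using assms(1,4) by (rule star_eigenfunction_edge_form)
  define b where "b = a 0 / sin (k * eps)"
  have a_eq: "a j = b * star_amplitude eps k j" if "j \<le> s" for j
  proof (cases "j = 0")
    case False
    from common that have "a j * osc_sin (k\<^sup>2) (edge_len eps j) = a 0 * osc_sin (k\<^sup>2) 1"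
      by blast
    with False \<open>k > 0\<close> have "a j * sin (k * eps) = a 0 * sin k"
      by (simp add: osc_sin_cos_sq)
    with False sin_eps show ?thesis by (simp add: b_def star_amplitude_def field_simps)
  qed (use sin_eps in \<open>simp add: b_def star_amplitude_def\<close>)
  have "b \<noteq> 0"
    using nontrivial a_eq by fastforce
  have "b * secular s eps k = (\<Sum>j\<le>s. a j * osc_cos (k\<^sup>2) (edge_len eps j))"
    using \<open>k > 0\<close>
    by (simp add: a_eq osc_sin_cos_sq sum_star_amplitude_cos[symmetric] sum_distrib_left mult.assoc)
  with kirchhoff \<open>b \<noteq> 0\<close> show "secular s eps k = 0" by simp
  have "\<forall>j\<le>s. \<forall>x\<in>{0..edge_len eps j}. f j x = b / k * star_mode eps k j x"
    using form a_eq \<open>k > 0\<close> by (simp add: osc_sin_cos_sq star_mode_def)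
  with \<open>b \<noteq> 0\<close> \<open>k > 0\<close> show "\<exists>c. c \<noteq> 0 \<and> (\<forall>j\<le>s. \<forall>x\<in>{0..edge_len eps j}. f j x = c * star_mode eps k j x)"
    by (intro exI[of _ "b / k"]) simp
qed

lemma star_simple_eigenvalue_sq:
  assumes "eps > 0" and "k > 0" and "k * eps < pi" and "secular s eps k = 0"
  shows "star_simple_eigenvalue s eps (k\<^sup>2)"
  unfolding star_simple_eigenvalue_def star_eigenvalue_def
proof (intro conjI allI impI)
  have "sin (k * eps) > 0"
    using assms(1-3) by (simp add: sin_gt_zero)
  then have "sin (k * eps) \<noteq> 0" by simp
  with assms(2,4) show "\<exists>f. star_eigenfunction s eps (k\<^sup>2) f"
    using star_mode_eigenfunction by blast
  fix f g
  assume "star_eigenfunction s eps (k\<^sup>2) f" and "star_eigenfunction s eps (k\<^sup>2) g"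
  with assms(1-3) obtain cf cg where "cf \<noteq> 0"
    and "\<forall>j\<le>s. \<forall>x\<in>{0..edge_len eps j}. f j x = cf * star_mode eps k j x"
    and "\<forall>j\<le>s. \<forall>x\<in>{0..edge_len eps j}. g j x = cg * star_mode eps k j x"
    by (metis star_eigenfunction_sq_eq_mode(2))
  then show "\<exists>c. \<forall>j\<le>s. \<forall>x\<in>{0..edge_len eps j}. g j x = c * f j x"
    by (intro exI[of _ "cg / cf"]) simp
qed

lemma nat_mult_pi_less_imp_pos:
  assumes "real m * pi < k"
  shows "k > 0"
proof -
  have "0 \<le> real m * pi" by simp
  with assms show ?thesis by linarith
qed

lemma sin_zeros_unit_interval:
  assumes "real m * pi < k" and "k < real (Suc m) * pi"
  shows "{x. 0 < x \<and> x < 1 \<and> sin (k * (1 - x)) = 0} = (\<lambda>i. 1 - real i * pi / k) ` {1..m}"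
proof (intro set_eqI iffI)
  have "k > 0" using assms(1) by (rule nat_mult_pi_less_imp_pos)
  fix x
  assume "x \<in> {x. 0 < x \<and> x < 1 \<and> sin (k * (1 - x)) = 0}"
  then have "0 < x" "x < 1" and "sin (k * (1 - x)) = 0" by auto
  then obtain i :: int where i: "k * (1 - x) = of_int i * pi"
    by (auto simp: sin_zero_iff_int2)
  have "0 < k * (1 - x)" and "k * (1 - x) < k"
    using \<open>k > 0\<close> \<open>0 < x\<close> \<open>x < 1\<close> by simp_all
  then have "0 < of_int i * pi" and "of_int i * pi < real (Suc m) * pi"
    using i assms(2) by linarith+
  then have "0 < i" and "i \<le> int m"
    by (simp_all add: zero_less_mult_iff)
  moreover have "x = 1 - real (nat i) * pi / k"
    using i \<open>k > 0\<close> \<open>0 < i\<close> by (simp add: field_simps)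
  ultimately show "x \<in> (\<lambda>i. 1 - real i * pi / k) ` {1..m}"
    by (intro image_eqI[of _ _ "nat i"]) auto
next
  have "k > 0" using assms(1) by (rule nat_mult_pi_less_imp_pos)
  fix x
  assume "x \<in> (\<lambda>i. 1 - real i * pi / k) ` {1..m}"
  then obtain i where "i \<in> {1..m}" and x: "x = 1 - real i * pi / k" by blast
  then have "0 < real i * pi" and "real i * pi \<le> real m * pi" by simp_all
  with assms(1) have "0 < real i * pi" and "real i * pi < k" by linarith+
  then have "0 < real i * pi / k" and "real i * pi / k < 1"
    using \<open>k > 0\<close> by simp_all
  then have "0 < x" and "x < 1"
    using x by simp_all
  moreover have "k * (1 - x) = real i * pi"
    using x \<open>k > 0\<close> by simp
  ultimately show "x \<in> {x. 0 < x \<and> x < 1 \<and> sin (k * (1 - x)) = 0}"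
    by simp
qed

lemma card_sin_zeros_unit_interval:
  assumes "real m * pi < k" and "k < real (Suc m) * pi"
  shows "finite {x. 0 < x \<and> x < 1 \<and> sin (k * (1 - x)) = 0}"
    and "card {x. 0 < x \<and> x < 1 \<and> sin (k * (1 - x)) = 0} = m"
proof -
  have "k > 0" using assms(1) by (rule nat_mult_pi_less_imp_pos)
  then have "inj_on (\<lambda>i. 1 - real i * pi / k) {1..m}"
    by (intro inj_onI) (simp add: field_simps)
  then show "finite {x. 0 < x \<and> x < 1 \<and> sin (k * (1 - x)) = 0}"
    and "card {x. 0 < x \<and> x < 1 \<and> sin (k * (1 - x)) = 0} = m"
    by (simp_all add: sin_zeros_unit_interval[OF assms] card_image)
qed

lemma sin_mult_diff_pos:
  assumes "k > 0" and "0 \<le> x" and "x < eps" and "k * eps < pi"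
  shows "sin (k * (eps - x)) > 0"
proof (rule sin_gt_zero)
  show "0 < k * (eps - x)" using assms(1,3) by simp
  have "k * (eps - x) \<le> k * eps" using assms(1,2) by (simp add: mult_left_mono)
  with assms(4) show "k * (eps - x) < pi" by linarith
qed

lemma star_eigenfunction_sq_nodal:
  assumes "eps > 0" and "real (n - 1) * pi < k" and "k < real n * pi" and "k * eps < pi"
    and "star_eigenfunction s eps (k\<^sup>2) f"
  shows "(\<forall>\<sigma>. \<sigma> permutes {1..s} \<longrightarrow> (\<forall>j\<in>{1..s}. \<forall>x\<in>{0..eps}. f (\<sigma> j) x = f j x))
      \<and> finite {x. 0 < x \<and> x < 1 \<and> f 0 x = 0}
      \<and> card {x. 0 < x \<and> x < 1 \<and> f 0 x = 0} = n - 1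
      \<and> f 0 0 \<noteq> 0
      \<and> (\<forall>j\<in>{1..s}. \<forall>x. 0 \<le> x \<and> x < eps \<longrightarrow> f j x \<noteq> 0)"
proof -
  obtain m where n: "n = Suc m" using assms(2,3) by (cases n) auto
  with assms(2,3) have interval: "real m * pi < k" "k < real (Suc m) * pi" by simp_all
  have "k > 0" using interval(1) by (rule nat_mult_pi_less_imp_pos)
  have sin_eps: "sin (k * eps) > 0"
    using assms(1,4) \<open>k > 0\<close> by (simp add: sin_gt_zero)
  obtain c where "c \<noteq> 0" and mode: "\<forall>j\<le>s. \<forall>x\<in>{0..edge_len eps j}. f j x = c * star_mode eps k j x"
    using star_eigenfunction_sq_eq_mode(2)[OF assms(1) \<open>k > 0\<close> assms(4,5)] by blast
  have "sin k \<noteq> 0"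
    using star_eigenfunction_sq_eq_mode(1)[OF assms(1) \<open>k > 0\<close> assms(4,5)] sin_eps
    by (simp add: secular_sin_ne_zero)
  have long: "f 0 x = c * sin (k * eps) * sin (k * (1 - x))" if "x \<in> {0..1}" for x
    using mode that by (simp add: star_mode_def star_amplitude_def)
  have short: "f j x = c * sin k * sin (k * (eps - x))" if "j \<in> {1..s}" and "x \<in> {0..eps}" for j x
    using mode that by (simp add: star_mode_def star_amplitude_def)
  have "{x. 0 < x \<and> x < 1 \<and> f 0 x = 0} = {x. 0 < x \<and> x < 1 \<and> sin (k * (1 - x)) = 0}"
    using long \<open>c \<noteq> 0\<close> sin_eps by auto
  moreover have "f j x \<noteq> 0" if "j \<in> {1..s}" and "0 \<le> x" and "x < eps" for j x
    using that short \<open>c \<noteq> 0\<close> \<open>sin k \<noteq> 0\<close> sin_mult_diff_pos[OF \<open>k > 0\<close> _ _ assms(4)]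
    by fastforce
  moreover have "f (\<sigma> j) x = f j x"
    if "\<sigma> permutes {1..s}" and "j \<in> {1..s}" and "x \<in> {0..eps}" for \<sigma> j x
  proof -
    have "\<sigma> j \<in> {1..s}" using permutes_in_image[OF that(1)] that(2) by simp
    with that show ?thesis by (simp add: short)
  qed
  ultimately show ?thesis
    using long[of 0] \<open>c \<noteq> 0\<close> \<open>sin k \<noteq> 0\<close> sin_eps card_sin_zeros_unit_interval[OF interval] n
    by auto
qed

section \<open>Roots of the secular equation\<close>

lemma IVT_sign_change:
  fixes g :: "real \<Rightarrow> real"
  assumes "continuous_on {a..b} g" and "a \<le> b" and "g a * g b < 0"
  shows "\<exists>x. a < x \<and> x < b \<and> g x = 0"
proof -
  have "\<exists>x. a \<le> x \<and> x \<le> b \<and> g x = 0"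
  proof (cases "g a < 0")
    case True
    with assms(3) have "g b > 0" by (simp add: mult_less_0_iff)
    with True assms(1,2) show ?thesis using IVT'[of g a 0 b] by simp
  next
    case False
    with assms(3) have "g a > 0" and "g b < 0" by (auto simp: mult_less_0_iff)
    with assms(1,2) show ?thesis using IVT2'[of g b 0 a] by simp
  qed
  moreover have "g a \<noteq> 0" and "g b \<noteq> 0" using assms(3) by auto
  ultimately show ?thesis by (metis order_le_less)
qed

lemma continuous_on_secular: "continuous_on A (secular s eps)"
  unfolding secular_def[abs_def] by (intro continuous_intros)

lemma secular_npi: "secular s eps (real n * pi) = (-1) ^ n * sin (real n * pi * eps)"
  by (simp add: secular_def)

lemma secular_root_exists:
  assumes "s \<ge> 1" and "eps > 0" and "real (Suc m) * eps < 1"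
  shows "\<exists>k. real m * pi < k \<and> k < real (Suc m) * pi \<and> secular s eps k = 0"
proof -
  have sin_right: "sin (real (Suc m) * pi * eps) > 0"
    using assms(2,3) by (intro sin_gt_zero) (simp_all add: mult.commute mult.left_commute)
  show ?thesis
  proof (cases "m = 0")
    case True
    have "0 < pi / 2 * eps" and "pi / 2 * eps < pi / 2"
      using assms(2,3) True by simp_all
    then have "cos (pi / 2 * eps) > 0"
      using pi_gt_zero by (intro cos_gt_zero_pi) linarith+
    then have "secular s eps (pi / 2) > 0"
      using assms(1) by (simp add: secular_def mult.commute)
    moreover have "secular s eps pi < 0"
      using sin_right True by (simp add: secular_def)
    ultimately have "\<exists>k. pi / 2 < k \<and> k < pi \<and> secular s eps k = 0"
      by (intro IVT_sign_change continuous_on_secular) (simp_all add: mult_pos_neg)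
    then obtain k where "pi / 2 < k" and "k < pi" and "secular s eps k = 0" by blast
    with True show ?thesis
      using pi_gt_zero by (intro exI[of _ k]) simp
  next
    case False
    have "sin (real m * pi * eps) > 0"
    proof (rule sin_gt_zero)
      show "0 < real m * pi * eps" using False assms(2) by simp
      have "real m * eps < 1" using assms(2,3) by (simp add: algebra_simps)
      then show "real m * pi * eps < pi" by (simp add: mult.commute mult.left_commute)
    qed
    moreover have "(-1::real) ^ m * (-1) ^ Suc m = -1"
      by (induct m) auto
    ultimately have "secular s eps (real m * pi) * secular s eps (real (Suc m) * pi) < 0"
      using sin_right by (simp only: secular_npi) (simp add: algebra_simps)
    then show ?thesis
      by (intro IVT_sign_change continuous_on_secular) simp_all
  qed
qed

lemma cot_strict_decreasing:
  fixes a b :: real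
  assumes "sin a * sin b > 0" and "a < b" and "b - a < pi"
  shows "cot b < cot a"
proof -
  have "sin a \<noteq> 0" and "sin b \<noteq> 0" using assms(1) by auto
  then have "cot a - cot b = sin (b - a) / (sin a * sin b)"
    by (simp add: cot_def sin_diff field_simps)
  moreover have "sin (b - a) > 0" using assms(2,3) by (simp add: sin_gt_zero)
  ultimately have "cot a - cot b > 0" using assms(1) by (metis divide_pos_pos)
  then show ?thesis by simp
qed

lemma sin_mult_pos_same_interval:
  assumes "real m * pi < a" "a < real (Suc m) * pi" "real m * pi < b" "b < real (Suc m) * pi"
  shows "sin a * sin b > 0"
proof -
  have shift: "sin x = (-1) ^ m * sin (x - real m * pi)" for x
    by (simp add: sin_diff flip: power_mult_distrib)
  have "sin (a - real m * pi) > 0" and "sin (b - real m * pi) > 0"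
    using assms by (auto intro!: sin_gt_zero simp: algebra_simps)
  then show ?thesis
    by (subst (1 2) shift) (simp add: algebra_simps flip: power_mult_distrib)
qed

lemma secular_eq_cot:
  assumes "sin k \<noteq> 0" and "sin (k * eps) \<noteq> 0"
  shows "secular s eps k = sin k * sin (k * eps) * (cot k + real s * cot (k * eps))"
  using assms by (simp add: secular_def cot_def field_simps)

lemma secular_root_unique:
  assumes "eps > 0"
    and "real m * pi < k\<^sub>1" "k\<^sub>1 < real (Suc m) * pi" "k\<^sub>1 * eps < pi" "secular s eps k\<^sub>1 = 0"
    and "real m * pi < k\<^sub>2" "k\<^sub>2 < real (Suc m) * pi" "k\<^sub>2 * eps < pi" "secular s eps k\<^sub>2 = 0"
  shows "k\<^sub>1 = k\<^sub>2"
proof -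
  \<comment> \<open>\<open>cot k + s cot (k eps)\<close> vanishes at every root and is strictly decreasing on the interval.\<close>
  have False if "real m * pi < a" "a < b" "b < real (Suc m) * pi" "b * eps < pi"
    and "secular s eps a = 0" "secular s eps b = 0" for a b
  proof -
    have "a > 0" using that(1) by (rule nat_mult_pi_less_imp_pos)
    have "a * eps < b * eps" using that(2) assms(1) by simp
    then have "a * eps < pi" using that(4) by linarith
    then have sin_eps: "sin (a * eps) > 0" "sin (b * eps) > 0"
      using \<open>a > 0\<close> \<open>a < b\<close> that(4) assms(1) by (simp_all add: sin_gt_zero)
    have sin: "sin a * sin b > 0"
      using that(1-3) by (intro sin_mult_pos_same_interval) simp_all
    have "cot b < cot a"
      using sin that(1-3) by (intro cot_strict_decreasing) (simp_all add: algebra_simps)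
    moreover have "cot (b * eps) < cot (a * eps)"
    proof (rule cot_strict_decreasing)
      have "0 < a * eps" using \<open>a > 0\<close> assms(1) by simp
      then show "b * eps - a * eps < pi" using that(4) by linarith
    qed (use sin_eps \<open>a * eps < b * eps\<close> in simp_all)
    moreover from calculation(2) have "real s * cot (b * eps) \<le> real s * cot (a * eps)"
      by (intro mult_left_mono) simp_all
    ultimately have "cot b + real s * cot (b * eps) < cot a + real s * cot (a * eps)"
      by linarith
    moreover have "sin a \<noteq> 0" "sin b \<noteq> 0" using sin by auto
    ultimately show False
      using that(5,6) sin_eps by (simp add: secular_eq_cot)
  qed
  with assms show ?thesis by (metis linorder_neqE_linordered_idom)
qed

lemma mult_eps_less_pi:
  assumes "eps > 0" and "real n * eps < 1" and "k < real n * pi"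
  shows "k * eps < pi"
proof -
  have "k * eps < real n * pi * eps" using assms(1,3) by simp
  also have "\<dots> = pi * (real n * eps)" by simp
  also have "\<dots> < pi" using assms(2) by simp
  finally show ?thesis .
qed

text \<open>A definite description: it denotes the root in \<open>((n - 1) pi, n pi)\<close> only when that root
  exists and is unique, which is the case for \<open>s \<ge> 1\<close> and \<open>n eps < 1\<close>.\<close>

definition secular_root :: "nat \<Rightarrow> real \<Rightarrow> nat \<Rightarrow> real" where
  "secular_root s eps n = (THE k. real (n - 1) * pi < k \<and> k < real n * pi \<and> secular s eps k = 0)"

lemma secular_root_eqI:
  assumes "eps > 0" and "real n * eps < 1"
    and "real (n - 1) * pi < k" and "k < real n * pi" and "secular s eps k = 0"
  shows "secular_root s eps n = k"
  unfolding secular_root_def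
proof (rule the_equality)
  have "n \<noteq> 0" using assms(3,4) by (cases n) auto
  then obtain m where n: "n = Suc m" using not0_implies_Suc by blast
  fix k' assume k': "real (n - 1) * pi < k' \<and> k' < real n * pi \<and> secular s eps k' = 0"
  show "k' = k"
    using secular_root_unique[of eps m k' s k] assms k' mult_eps_less_pi[OF assms(1,2)]
    unfolding n by simp
qed (use assms in simp)

lemma secular_root:
  assumes "s \<ge> 1" and "eps > 0" and "real M * eps < 1" and "n \<in> {1..M}"
  shows "real (n - 1) * pi < secular_root s eps n" and "secular_root s eps n < real n * pi"
    and "secular s eps (secular_root s eps n) = 0" and "secular_root s eps n * eps < pi"
    and "secular_root s eps n > 0"
proof -
  obtain m where n: "n = Suc m" using assms(4) by (cases n) auto
  have "real n * eps \<le> real M * eps" using assms(2,4) by (intro mult_right_mono) simp_all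
  with assms(3) have small: "real n * eps < 1" by linarith
  with n obtain k where k: "real (n - 1) * pi < k" "k < real n * pi" "secular s eps k = 0"
    using secular_root_exists[OF assms(1,2)] by auto
  with assms(2) small have "secular_root s eps n = k" by (intro secular_root_eqI)
  with k show "real (n - 1) * pi < secular_root s eps n" and "secular_root s eps n < real n * pi"
    and "secular s eps (secular_root s eps n) = 0" and "secular_root s eps n * eps < pi"
    and "secular_root s eps n > 0"
    using mult_eps_less_pi[OF assms(2) small] nat_mult_pi_less_imp_pos[of "n - 1" k] by simp_all
qed

lemma star_eigenvalue_eq_secular_root:
  assumes "eps > 0" and "real M * eps < 1"
    and "star_eigenvalue s eps mu" and "mu < (real M * pi)\<^sup>2"
  shows "\<exists>n\<in>{1..M}. mu = (secular_root s eps n)\<^sup>2"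
proof -
  have "mu > 0" using assms(1,3) by (rule star_eigenvalue_pos)
  define k where "k = sqrt mu"
  have "k > 0" and mu: "mu = k\<^sup>2" using \<open>mu > 0\<close> by (simp_all add: k_def)
  have "k < real M * pi"
    using real_sqrt_less_mono[OF assms(4)] by (simp add: k_def)
  with assms(1,2) have "k * eps < pi" by (rule mult_eps_less_pi)
  obtain f where "star_eigenfunction s eps (k\<^sup>2) f"
    using assms(3) mu unfolding star_eigenvalue_def by blast
  then have secular: "secular s eps k = 0"
    using assms(1) \<open>k > 0\<close> \<open>k * eps < pi\<close> by (intro star_eigenfunction_sq_eq_mode(1))
  have "sin (k * eps) > 0" using assms(1) \<open>k > 0\<close> \<open>k * eps < pi\<close> by (simp add: sin_gt_zero)
  then have "sin k \<noteq> 0" using secular secular_sin_ne_zero by simp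
  define m where "m = nat \<lfloor>k / pi\<rfloor>"
  have "real m = of_int \<lfloor>k / pi\<rfloor>" using \<open>k > 0\<close> by (simp add: m_def)
  then have "real m \<le> k / pi" and "k / pi < real m + 1"
    using of_int_floor_le[of "k / pi"] real_of_int_floor_add_one_gt[of "k / pi"] by linarith+
  then have "real m * pi \<le> k" and upper: "k < real (Suc m) * pi"
    by (simp_all add: field_simps)
  moreover have "k \<noteq> real m * pi" using \<open>sin k \<noteq> 0\<close> by auto
  ultimately have lower: "real m * pi < k" by simp
  with \<open>k < real M * pi\<close> have "real m * pi < real M * pi" by linarith
  then have "m < M" by simp
  then have "real (Suc m) * eps \<le> real M * eps"
    using assms(1) by (intro mult_right_mono) simp_all
  with assms(2) have "real (Suc m) * eps < 1" by linarith
  then have "secular_root s eps (Suc m) = k"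
    using assms(1) lower upper secular by (intro secular_root_eqI) simp_all
  with \<open>m < M\<close> mu show ?thesis by (intro bexI[of _ "Suc m"]) auto
qed

theorem lemma15:
  fixes s M :: nat
  assumes "s \<ge> 1" and "M \<ge> 1"
  shows "\<exists>eps > 0. \<exists>lam :: nat \<Rightarrow> real.
     (\<forall>n\<in>{1..<M}. lam n < lam (Suc n))
   \<and> (\<forall>mu. star_eigenvalue s eps mu \<and> mu \<le> lam M \<longrightarrow> (\<exists>n\<in>{1..M}. mu = lam n))
   \<and> (\<forall>n\<in>{1..M}. star_simple_eigenvalue s eps (lam n))
   \<and> (\<forall>n\<in>{1..M}. \<forall>f. star_eigenfunction s eps (lam n) f \<longrightarrow>
        (\<forall>\<sigma>. \<sigma> permutes {1..s} \<longrightarrow> (\<forall>j\<in>{1..s}. \<forall>x\<in>{0..eps}. f (\<sigma> j) x = f j x))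
      \<and> finite {x. 0 < x \<and> x < 1 \<and> f 0 x = 0}
      \<and> card {x. 0 < x \<and> x < 1 \<and> f 0 x = 0} = n - 1
      \<and> f 0 0 \<noteq> 0
      \<and> (\<forall>j\<in>{1..s}. \<forall>x. 0 \<le> x \<and> x < eps \<longrightarrow> f j x \<noteq> 0))"
proof -
  define eps :: real where "eps = 1 / (real M + 1)"
  define k where "k = secular_root s eps"
  have "eps > 0" and small: "real M * eps < 1" by (simp_all add: eps_def field_simps)
  note root = secular_root[OF assms(1) \<open>eps > 0\<close> small, folded k_def]
  show ?thesis
  proof (intro exI[of _ eps] conjI[OF \<open>eps > 0\<close>] exI[of _ "\<lambda>n. (k n)\<^sup>2"] conjI;
         intro ballI allI impI)
    fix n assume "n \<in> {1..<M}"
    then have "0 < k n" and "k n < k (Suc n)"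
      using root(2,5)[of n] root(1)[of "Suc n"] by auto
    then show "(k n)\<^sup>2 < (k (Suc n))\<^sup>2" by (simp add: power_strict_mono)
  next
    fix mu assume "star_eigenvalue s eps mu \<and> mu \<le> (k M)\<^sup>2"
    moreover have "(k M)\<^sup>2 < (real M * pi)\<^sup>2"
      using root(2,5)[of M] assms(2) by (simp add: power_strict_mono)
    ultimately have "star_eigenvalue s eps mu" and "mu < (real M * pi)\<^sup>2" by auto
    with \<open>eps > 0\<close> small show "\<exists>n\<in>{1..M}. mu = (k n)\<^sup>2"
      unfolding k_def by (rule star_eigenvalue_eq_secular_root)
  next
    fix n assume "n \<in> {1..M}"
    with \<open>eps > 0\<close> show "star_simple_eigenvalue s eps ((k n)\<^sup>2)"
      by (simp add: root star_simple_eigenvalue_sq)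
  qed (rule star_eigenfunction_sq_nodal[OF \<open>eps > 0\<close> root(1,2,4)], assumption+)
qed

end
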